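(* Let $k\ge2$, let $R\subset\mathbb{N}^k$ be a simple region, and let $n$ be such that $S_n^{\mathbb{N}}$ contains both accessible points (points of $R_n$) and boundary points (points of $B_n$). Then for every nonempty collection $C_n\subset B_n$ there exist a point $\bar y\in C_n$ and a $(k-2)$-dimensional affine subspace $\pi_{\bar y}$ of the hyperplane $\{x\in\mathbb{R}^k: x_1+\cdots+x_k=n\}$ such that: (1) $\bar y\in\pi_{\bar y}$; (2) $\pi_{\bar y}$ is given by the two equations $L(x)=m_1x_1+\cdots+m_kx_k=b$ and $x_1+\cdots+x_k=n$, where $b\in\mathbb{N}$ and all $m_i\in\mathbb{N}$, with at least one $m_i$ equal to $0$ and at least one $m_i$ nonzero; (3) $L(x)\ge b+1$ for every $x\in R_n$; (4) $L(y)\ge b+1$ for every $y\in C_n$ with $y\neq\bar y$.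
   Context: For $n\in\mathbb{N}$, $S_n\subset\mathbb{R}^k$ is the set of points with nonnegative coordinates summing to $n$, and $S_n^{\mathbb{N}}=S_n\cap\mathbb{N}^k$. For a region $R\subset\mathbb{N}^k$, its boundary $B$ is the set of points not in $R$ that can be reached in one step (by adding a standard unit vector $e_i$) from a point of $R$. Set $R_n=R\cap S_n^{\mathbb{N}}$ (accessible points of order $n$), $B_n=B\cap S_n^{\mathbb{N}}$ (boundary points of order $n$); points of $S_n^{\mathbb{N}}\setminus R_n$ are inaccessible. $R$ is simple if for every $n$ the convex hull of $R_n$ in $\mathbb{R}^k$ contains no inaccessible point of order $n$. *)

theory Defs
  imports "HOL-Analysis.Analysis"
begin

text \<open>Lattice points of \<nat>^k are functions 'n \<Rightarrow> nat over a finite index type 'n with CARD('n) = k.\<close>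

definition vec_of :: "('n::finite \<Rightarrow> nat) \<Rightarrow> real ^ 'n" where
  "vec_of x = (\<chi> i. real (x i))"

definition order_of :: "('n::finite \<Rightarrow> nat) \<Rightarrow> nat" where
  "order_of x = (\<Sum>i\<in>UNIV. x i)"

definition step :: "('n \<Rightarrow> nat) \<Rightarrow> 'n \<Rightarrow> ('n \<Rightarrow> nat)" where
  "step x i = x(i := Suc (x i))"

definition boundary :: "('n::finite \<Rightarrow> nat) set \<Rightarrow> ('n \<Rightarrow> nat) set" where
  "boundary R = {y. y \<notin> R \<and> (\<exists>x\<in>R. \<exists>i. y = step x i)}"

definition layer :: "('n::finite \<Rightarrow> nat) set \<Rightarrow> nat \<Rightarrow> ('n \<Rightarrow> nat) set" where
  "layer A n = {x \<in> A. order_of x = n}"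

definition simple_region :: "('n::finite \<Rightarrow> nat) set \<Rightarrow> bool" where
  "simple_region R \<longleftrightarrow>
     (\<forall>n. \<forall>y. order_of y = n \<and> y \<notin> R \<longrightarrow> vec_of y \<notin> convex hull (vec_of ` layer R n))"

end

theory Submission imports Defs begin

text \<open>Simplicity puts no point of \<open>C\<^sub>n\<close> in the convex hull of \<open>R\<^sub>n\<close>, so some extreme point
  of the polytope spanned by \<open>R\<^sub>n \<union> C\<^sub>n\<close> lies in \<open>C\<^sub>n\<close>; this is \<open>\<bar>y\<close>. It is strictly separated
  from the other points by a hyperplane, whose normal may be rounded to an integer vector
  after scaling. Since all points have coordinate sum \<open>n\<close>, subtracting the least coefficient
  from every coefficient only shifts the functional by a constant, and yields natural
  coefficients one of which vanishes.\<close>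

lemma extreme_point_outside_convex_hull:
  fixes P Q :: "'a::euclidean_space set"
  assumes "finite P" "finite Q" "Q \<noteq> {}" "\<And>q. q \<in> Q \<Longrightarrow> q \<notin> convex hull P"
  shows "\<exists>z\<in>Q. z \<notin> convex hull (P \<union> Q - {z})"
proof -
  let ?S = "P \<union> Q"
  let ?E = "{x. x extreme_point_of (convex hull ?S)}"
  have hull_extreme: "convex hull ?S = convex hull ?E"
    using assms(1,2) by (intro Krein_Milman_polytope) simp
  have "\<not> ?E \<subseteq> P"
  proof
    assume "?E \<subseteq> P"
    then have "convex hull ?S \<subseteq> convex hull P"
      using hull_extreme hull_mono[of ?E P convex] by simp
    moreover obtain q where "q \<in> Q" using assms(3) by auto
    moreover have "q \<in> convex hull ?S" using \<open>q \<in> Q\<close> hull_subset by fastforce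
    ultimately show False using assms(4) by blast
  qed
  then obtain z where z: "z extreme_point_of (convex hull ?S)" and "z \<notin> P" by auto
  then have "z \<in> Q" using extreme_point_of_convex_hull[OF z] by auto
  have "convex (convex hull ?S - {z})"
    using z extreme_point_of_stillconvex convex_convex_hull by blast
  moreover have "?S - {z} \<subseteq> convex hull ?S - {z}" using hull_subset by fastforce
  ultimately have "convex hull (?S - {z}) \<subseteq> convex hull ?S - {z}" by (simp add: hull_minimal)
  then show ?thesis using \<open>z \<in> Q\<close> by blast
qed

lemma floor_scaled_mult_ge:
  fixes N a d :: real
  shows "real_of_int \<lfloor>N * a\<rfloor> * d \<ge> N * a * d - \<bar>d\<bar>"
proof (cases "d \<ge> 0")
  case True
  have "(N * a - 1) * d \<le> real_of_int \<lfloor>N * a\<rfloor> * d"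
    using True by (intro mult_right_mono) linarith+
  then show ?thesis using True by (simp add: algebra_simps)
next
  case False
  have "N * a * d \<le> real_of_int \<lfloor>N * a\<rfloor> * d"
    using False by (intro mult_right_mono_neg) auto
  then show ?thesis using False by linarith
qed

lemma integer_separation:
  fixes y :: "'n::finite \<Rightarrow> nat" and T :: "('n \<Rightarrow> nat) set"
  assumes "finite T" "vec_of y \<notin> convex hull (vec_of ` T)"
  shows "\<exists>c :: 'n \<Rightarrow> int. \<forall>x\<in>T. (\<Sum>i\<in>UNIV. c i * int (y i)) < (\<Sum>i\<in>UNIV. c i * int (x i))"
proof -
  have "closed (convex hull (vec_of ` T))"
    using assms(1) by (simp add: compact_imp_closed finite_imp_compact_convex_hull)
  then obtain a \<beta> where sep: "a \<bullet> vec_of y < \<beta>" "\<forall>p\<in>convex hull (vec_of ` T). \<beta> < a \<bullet> p"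
    using separating_hyperplane_closed_point[OF convex_convex_hull _ assms(2)] by blast
  define \<epsilon> where "\<epsilon> = \<beta> - a \<bullet> vec_of y"
  define d where "d x i = real (x i) - real (y i)" for x i
  have gap: "\<epsilon> < (\<Sum>i\<in>UNIV. a $ i * d x i)" if "x \<in> T" for x
  proof -
    have "vec_of x \<in> convex hull (vec_of ` T)" using that hull_subset by fastforce
    then have "\<beta> < a \<bullet> vec_of x" using sep(2) by blast
    moreover have "a \<bullet> vec_of x - a \<bullet> vec_of y = (\<Sum>i\<in>UNIV. a $ i * d x i)"
      by (simp add: inner_vec_def vec_of_def d_def sum_subtractf[symmetric] algebra_simps)
    ultimately show ?thesis by (simp add: \<epsilon>_def)
  qed
  define K where "K = 1 + (\<Sum>x\<in>T. \<Sum>i\<in>UNIV. \<bar>d x i\<bar>)"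
  have K: "(\<Sum>i\<in>UNIV. \<bar>d x i\<bar>) < K" if "x \<in> T" for x
  proof -
    have "(\<Sum>i\<in>UNIV. \<bar>d x i\<bar>) \<le> (\<Sum>x\<in>T. \<Sum>i\<in>UNIV. \<bar>d x i\<bar>)"
      by (rule member_le_sum[OF that _ assms(1)]) (simp add: sum_nonneg)
    then show ?thesis by (simp add: K_def)
  qed
  obtain N :: nat where "K / \<epsilon> < real N" using reals_Archimedean2 by blast
  moreover have "\<epsilon> > 0" using sep(1) by (simp add: \<epsilon>_def)
  ultimately have NK: "K < real N * \<epsilon>" by (simp add: field_simps)
  define c where "c i = \<lfloor>real N * a $ i\<rfloor>" for i
  have "(\<Sum>i\<in>UNIV. c i * int (y i)) < (\<Sum>i\<in>UNIV. c i * int (x i))" if "x \<in> T" for x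
  proof -
    have "real N * \<epsilon> - (\<Sum>i\<in>UNIV. \<bar>d x i\<bar>)
        \<le> real N * (\<Sum>i\<in>UNIV. a $ i * d x i) - (\<Sum>i\<in>UNIV. \<bar>d x i\<bar>)"
      using gap[OF that] by (intro diff_right_mono mult_left_mono) auto
    also have "\<dots> = (\<Sum>i\<in>UNIV. real N * a $ i * d x i - \<bar>d x i\<bar>)"
      by (simp add: sum_subtractf sum_distrib_left mult.assoc)
    also have "\<dots> \<le> (\<Sum>i\<in>UNIV. real_of_int (c i) * d x i)"
      unfolding c_def by (intro sum_mono floor_scaled_mult_ge)
    also have "\<dots> = real_of_int ((\<Sum>i\<in>UNIV. c i * int (x i)) - (\<Sum>i\<in>UNIV. c i * int (y i)))"
      by (simp add: d_def sum_subtractf[symmetric] algebra_simps)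
    finally show ?thesis using K[OF that] NK by linarith
  qed
  then show ?thesis by blast
qed

lemma aff_dim_inter_two_hyperplanes:
  fixes u v z :: "'a::euclidean_space"
  assumes "independent {u, v}" "u \<noteq> v" "u \<bullet> z = b" "v \<bullet> z = c"
  shows "aff_dim {x. u \<bullet> x = b \<and> v \<bullet> x = c} = int DIM('a) - 2"
proof -
  define V where "V = {y. \<forall>x \<in> span {u, v}. orthogonal x y}"
  have V_iff: "y \<in> V \<longleftrightarrow> u \<bullet> y = 0 \<and> v \<bullet> y = 0" for y
  proof
    assume uv: "u \<bullet> y = 0 \<and> v \<bullet> y = 0"
    have "orthogonal y x" if "x \<in> span {u, v}" for x
      by (rule orthogonal_to_span[OF that]) (use uv in \<open>auto simp: orthogonal_def inner_commute\<close>)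
    then show "y \<in> V" by (simp add: V_def orthogonal_commute)
  qed (auto simp: V_def orthogonal_def span_base)
  have "{x. u \<bullet> x = b \<and> v \<bullet> x = c} = (+) z ` V"
  proof (intro set_eqI iffI)
    fix x assume "x \<in> {x. u \<bullet> x = b \<and> v \<bullet> x = c}"
    then have "x - z \<in> V" using assms(3,4) by (simp add: V_iff inner_diff_right)
    then show "x \<in> (+) z ` V" by (rule rev_image_eqI) simp
  qed (use assms(3,4) in \<open>auto simp: V_iff inner_add_right\<close>)
  moreover have "dim V + dim (span {u, v}) = DIM('a)"
    using dim_subspace_orthogonal_to_vectors[of "span {u, v}" UNIV] by (simp add: V_def)
  moreover have "dim (span {u, v}) = 2"
    using dim_span_eq_card_independent[OF assms(1)] assms(2) by simp
  moreover have "subspace V" by (auto simp: V_def subspace_def orthogonal_clauses)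
  ultimately show ?thesis
    by (simp add: aff_dim_translation_eq aff_dim_subspace of_nat_diff)
qed

lemma aff_dim_hyperplane_in_layer:
  fixes m :: "'n::finite \<Rightarrow> nat" and z :: "real ^ 'n"
  assumes "m i0 = 0" "m i1 \<noteq> 0"
    and "(\<Sum>i\<in>UNIV. real (m i) * z $ i) = b" "(\<Sum>i\<in>UNIV. z $ i) = s"
  shows "aff_dim {x. (\<Sum>i\<in>UNIV. real (m i) * x $ i) = b \<and> (\<Sum>i\<in>UNIV. x $ i) = s}
           = int CARD('n) - 2"
proof -
  define u :: "real ^ 'n" where "u = (\<chi> i. real (m i))"
  define v :: "real ^ 'n" where "v = (\<chi> i. 1)"
  have u_inner: "u \<bullet> x = (\<Sum>i\<in>UNIV. real (m i) * x $ i)" for x by (simp add: u_def inner_vec_def)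
  have v_inner: "v \<bullet> x = (\<Sum>i\<in>UNIV. x $ i)" for x by (simp add: v_def inner_vec_def)
  have "u \<noteq> v" using assms(1) by (metis one_neq_zero of_nat_0 u_def v_def vec_lambda_beta)
  moreover have "v \<noteq> 0" by (metis one_neq_zero v_def vec_lambda_beta zero_index)
  moreover have "u \<notin> span {v}"
  proof
    assume "u \<in> span {v}"
    then obtain t where "u = t *\<^sub>R v" by (auto simp: span_singleton)
    then have "u $ i0 = u $ i1" by (simp add: v_def)
    then show False using assms(1,2) by (simp add: u_def)
  qed
  ultimately have "independent {u, v}" by (simp add: independent_insert)
  from aff_dim_inter_two_hyperplanes[OF this \<open>u \<noteq> v\<close>] assms(3,4)
  show ?thesis by (simp add: u_inner v_inner)
qed

lemma finite_layer: "finite (layer (A :: ('n::finite \<Rightarrow> nat) set) n)"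
proof (rule finite_subset)
  show "layer A n \<subseteq> Pi\<^sub>E UNIV (\<lambda>_. {..n})"
  proof
    fix x assume "x \<in> layer A n"
    then have "x i \<le> n" for i
      using member_le_sum[of i UNIV x] by (simp add: layer_def order_of_def)
    then show "x \<in> Pi\<^sub>E UNIV (\<lambda>_. {..n})" by (simp add: PiE_UNIV_domain)
  qed
qed (simp add: finite_PiE)

lemma inj_vec_of: "inj vec_of"
  by (rule injI) (metis of_nat_eq_iff vec_lambda_beta vec_of_def ext)

lemma vec_of_linear_form:
  "(\<Sum>i\<in>UNIV. real (m i) * vec_of x $ i) = real (\<Sum>i\<in>UNIV. m i * x i)"
  by (simp add: vec_of_def)

lemma shift_to_nat_coefficients:
  fixes c :: "'n::finite \<Rightarrow> int"
  obtains m :: "'n \<Rightarrow> nat" and K :: int where "\<exists>i. m i = 0"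
    and "\<And>x. order_of x = n \<Longrightarrow> int (\<Sum>i\<in>UNIV. m i * x i) = (\<Sum>i\<in>UNIV. c i * int (x i)) - K"
proof -
  define cmin where "cmin = Min (range c)"
  have "cmin \<in> range c" unfolding cmin_def by (rule Min_in) auto
  then obtain i0 where "c i0 = cmin" by auto
  define m where "m i = nat (c i - cmin)" for i
  have "int (\<Sum>i\<in>UNIV. m i * x i) = (\<Sum>i\<in>UNIV. c i * int (x i)) - cmin * int n"
    if "order_of x = n" for x
  proof -
    have "int (\<Sum>i\<in>UNIV. m i * x i) = (\<Sum>i\<in>UNIV. (c i - cmin) * int (x i))"
      by (simp add: m_def cmin_def)
    also have "\<dots> = (\<Sum>i\<in>UNIV. c i * int (x i)) - cmin * (\<Sum>i\<in>UNIV. int (x i))"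
      by (simp add: algebra_simps sum_subtractf sum_distrib_left)
    finally show ?thesis using that by (simp add: order_of_def flip: of_nat_sum)
  qed
  moreover have "m i0 = 0" using \<open>c i0 = cmin\<close> by (simp add: m_def)
  ultimately show ?thesis using that by blast
qed

lemma nat_separating_form:
  fixes y :: "'n::finite \<Rightarrow> nat" and T :: "('n \<Rightarrow> nat) set"
  assumes "finite T" "vec_of y \<notin> convex hull (vec_of ` T)"
    and "order_of y = n" "\<And>x. x \<in> T \<Longrightarrow> order_of x = n"
  obtains m :: "'n \<Rightarrow> nat" where "\<exists>i. m i = 0"
    and "\<And>x. x \<in> T \<Longrightarrow> (\<Sum>i\<in>UNIV. m i * y i) < (\<Sum>i\<in>UNIV. m i * x i)"
proof -
  obtain c :: "'n \<Rightarrow> int"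
    where c: "\<And>x. x \<in> T \<Longrightarrow> (\<Sum>i\<in>UNIV. c i * int (y i)) < (\<Sum>i\<in>UNIV. c i * int (x i))"
    using integer_separation[OF assms(1,2)] by blast
  obtain m :: "'n \<Rightarrow> nat" and K
    where "\<exists>i. m i = 0"
      and "\<And>x. order_of x = n \<Longrightarrow> int (\<Sum>i\<in>UNIV. m i * x i) = (\<Sum>i\<in>UNIV. c i * int (x i)) - K"
    using shift_to_nat_coefficients[of n c] by blast
  with c assms(3,4) show ?thesis using that by (metis diff_strict_right_mono of_nat_less_iff)
qed

lemma simple_region_separated_boundary_point:
  fixes R C :: "('n::finite \<Rightarrow> nat) set"
  assumes "simple_region R" "C \<subseteq> layer (boundary R) n" "C \<noteq> {}"
  obtains ybar and m :: "'n \<Rightarrow> nat" where "ybar \<in> C" "\<exists>i. m i = 0"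
    and "\<And>x. x \<in> layer R n \<union> C - {ybar} \<Longrightarrow> (\<Sum>i\<in>UNIV. m i * ybar i) < (\<Sum>i\<in>UNIV. m i * x i)"
proof -
  have C_out: "q \<notin> R \<and> order_of q = n" if "q \<in> C" for q
    using that assms(2) by (auto simp: layer_def boundary_def)
  have "finite C" using assms(2) finite_layer finite_subset by blast
  have "vec_of q \<notin> convex hull (vec_of ` layer R n)" if "q \<in> C" for q
    using assms(1) C_out[OF that] unfolding simple_region_def by blast
  then obtain ybar where "ybar \<in> C"
    and "vec_of ybar \<notin> convex hull (vec_of ` layer R n \<union> vec_of ` C - {vec_of ybar})"
    using extreme_point_outside_convex_hull[of "vec_of ` layer R n" "vec_of ` C"]
      finite_layer \<open>finite C\<close> assms(3) by blast
  moreover define T where "T = layer R n \<union> C - {ybar}"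
  ultimately have "vec_of ybar \<notin> convex hull (vec_of ` T)"
    by (simp add: image_Un image_set_diff[OF inj_vec_of])
  moreover have "finite T" using finite_layer \<open>finite C\<close> by (simp add: T_def)
  moreover have "order_of x = n" if "x \<in> T" for x
    using that C_out by (auto simp: T_def layer_def)
  ultimately obtain m where "\<exists>i. m i = 0"
    and "\<And>x. x \<in> T \<Longrightarrow> (\<Sum>i\<in>UNIV. m i * ybar i) < (\<Sum>i\<in>UNIV. m i * x i)"
    using nat_separating_form[of T ybar n] C_out[OF \<open>ybar \<in> C\<close>] by blast
  with \<open>ybar \<in> C\<close> that show ?thesis by (simp add: T_def)
qed

theorem lemma1:
  fixes R :: "('n::finite \<Rightarrow> nat) set" and n :: nat and C :: "('n \<Rightarrow> nat) set"
  assumes "CARD('n) \<ge> 2"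
    and "simple_region R"
    and "layer R n \<noteq> {}"
    and "layer (boundary R) n \<noteq> {}"
    and "C \<subseteq> layer (boundary R) n" and "C \<noteq> {}"
  shows "\<exists>ybar\<in>C. \<exists>m :: 'n \<Rightarrow> nat. \<exists>b :: nat. \<exists>\<pi> :: (real ^ 'n) set.
           \<pi> = {x. (\<Sum>i\<in>UNIV. real (m i) * x $ i) = real b \<and> (\<Sum>i\<in>UNIV. x $ i) = real n}
         \<and> aff_dim \<pi> = int CARD('n) - 2
         \<and> \<pi> \<subseteq> {x. (\<Sum>i\<in>UNIV. x $ i) = real n}
         \<and> vec_of ybar \<in> \<pi>
         \<and> (\<exists>i. m i = 0) \<and> (\<exists>i. m i \<noteq> 0)
         \<and> (\<forall>x\<in>layer R n. (\<Sum>i\<in>UNIV. real (m i) * vec_of x $ i) \<ge> real b + 1)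
         \<and> (\<forall>y\<in>C. y \<noteq> ybar \<longrightarrow> (\<Sum>i\<in>UNIV. real (m i) * vec_of y $ i) \<ge> real b + 1)"
proof -
  obtain ybar m i0 where "ybar \<in> C" and "m i0 = 0"
    and sep: "\<And>x. x \<in> layer R n \<union> C - {ybar} \<Longrightarrow> (\<Sum>i\<in>UNIV. m i * ybar i) < (\<Sum>i\<in>UNIV. m i * x i)"
    using simple_region_separated_boundary_point[OF assms(2,5,6)] by blast
  have "ybar \<notin> R" "order_of ybar = n"
    using \<open>ybar \<in> C\<close> assms(5) by (auto simp: layer_def boundary_def)
  define b where "b = (\<Sum>i\<in>UNIV. m i * ybar i)"
  have above: "real b + 1 \<le> (\<Sum>i\<in>UNIV. real (m i) * vec_of x $ i)"
    if "x \<in> layer R n \<union> C - {ybar}" for x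
    using sep[OF that] unfolding vec_of_linear_form b_def by linarith
  have R_above: "x \<in> layer R n \<union> C - {ybar}" if "x \<in> layer R n" for x
    using that \<open>ybar \<notin> R\<close> by (auto simp: layer_def)
  obtain x where "x \<in> layer R n" using assms(3) by blast
  have "\<exists>i. m i \<noteq> 0"
  proof (rule ccontr)
    assume "\<not> (\<exists>i. m i \<noteq> 0)"
    then have "m = (\<lambda>_. 0)" by auto
    with sep[OF R_above[OF \<open>x \<in> layer R n\<close>]] show False by simp
  qed
  then obtain i1 where "m i1 \<noteq> 0" by blast
  have ybar_in: "(\<Sum>i\<in>UNIV. real (m i) * vec_of ybar $ i) = real b"
    "(\<Sum>i\<in>UNIV. vec_of ybar $ i) = real n"
    using \<open>order_of ybar = n\<close> unfolding b_def vec_of_linear_form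
    by (simp_all add: vec_of_def order_of_def flip: of_nat_sum)
  show ?thesis
  proof (intro bexI[OF _ \<open>ybar \<in> C\<close>] exI conjI)
    show "aff_dim {x. (\<Sum>i\<in>UNIV. real (m i) * x $ i) = real b \<and> (\<Sum>i\<in>UNIV. x $ i) = real n}
          = int CARD('n) - 2"
      by (rule aff_dim_hyperplane_in_layer[OF \<open>m i0 = 0\<close> \<open>m i1 \<noteq> 0\<close> ybar_in])
    show "\<forall>x\<in>layer R n. real b + 1 \<le> (\<Sum>i\<in>UNIV. real (m i) * vec_of x $ i)"
      using R_above above by blast
    show "\<forall>y\<in>C. y \<noteq> ybar \<longrightarrow> real b + 1 \<le> (\<Sum>i\<in>UNIV. real (m i) * vec_of y $ i)"
      using above by simp
  qed (use ybar_in \<open>m i0 = 0\<close> \<open>m i1 \<noteq> 0\<close> in auto)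
qed

end
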